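(* Let $\omega\in\mathbb{R}^n$ be resonant of order $r\ge1$. Then there exist a matrix $A\in GL_n(\mathbb{Z})$ and positive integers $d_1,\dots,d_r$ with $d_i$ dividing $d_{i+1}$ for $1\le i<r$, such that $(d_1e_1,\dots,d_re_r)$ is a basis of the resonance module $R(A\omega)$, where $(e_1,\dots,e_n)$ is the standard basis of $\mathbb{R}^n$. In particular $A\omega=(w/T,\omega')\in\mathbb{Q}^r\times\mathbb{R}^{n-r}$, where $\omega'\in\mathbb{R}^{n-r}$ is non-resonant and $w/T\in\mathbb{Q}^r$ is a rational vector of period $T=d_r$. When $\omega$ is rational (i.e. $r=n$), one obtains $n$ integers $d_1|d_2|\cdots|d_n$ with $d_n$ equal to the period of $\omega$, and a matrix $A\in GL_n(\mathbb{Z})$ such that $A\omega=(a_1/d_1,a_2/d_2,\dots,a_n/d_n)$ with each fraction $a_i/d_i$ irreducible ($a_i\in\mathbb{Z}$, $\gcd(a_i,d_i)=1$).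
   Context: For $\omega\in\mathbb{R}^m$, the resonance module $R(\omega)$ is the subgroup $\{k\in\mathbb{Z}^m:\langle k,\omega\rangle\in\mathbb{Z}\}$ of $\mathbb{Z}^m$; its rank is the resonance order of $\omega$. The vector $\omega$ is resonant if $R(\omega)\ne\{0\}$, non-resonant otherwise. A rational vector (all coordinates rational) has period equal to the least common denominator of its coordinates. *)

theory Defs
  imports Complex_Main
begin

text \<open>Vectors of \<open>\<real>^n\<close> / \<open>\<int>^n\<close> are represented as functions on \<open>nat\<close>,
  only the coordinates \<open>0..<n\<close> being relevant (0-based indexing).\<close>

definition zvec :: "nat \<Rightarrow> (nat \<Rightarrow> int) set" where
  "zvec n = {k. \<forall>i\<ge>n. k i = 0}"

definition resonance_module :: "nat \<Rightarrow> (nat \<Rightarrow> real) \<Rightarrow> (nat \<Rightarrow> int) set" where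
  "resonance_module n \<omega> =
     {k \<in> zvec n. (\<Sum>i<n. of_int (k i) * \<omega> i) \<in> \<int>}"

definition zlin_indep :: "nat \<Rightarrow> (nat \<Rightarrow> nat \<Rightarrow> int) \<Rightarrow> bool" where
  "zlin_indep r b \<longleftrightarrow>
     (\<forall>c :: nat \<Rightarrow> int. (\<forall>j. (\<Sum>i<r. c i * b i j) = 0) \<longrightarrow> (\<forall>i<r. c i = 0))"

definition zrank :: "(nat \<Rightarrow> int) set \<Rightarrow> nat" where
  "zrank M = (GREATEST r. \<exists>b. (\<forall>i<r. b i \<in> M) \<and> zlin_indep r b)"

definition is_zbasis :: "(nat \<Rightarrow> int) set \<Rightarrow> nat \<Rightarrow> (nat \<Rightarrow> nat \<Rightarrow> int) \<Rightarrow> bool" where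
  "is_zbasis M r b \<longleftrightarrow> zlin_indep r b \<and>
     M = {v. \<exists>c :: nat \<Rightarrow> int. v = (\<lambda>j. \<Sum>i<r. c i * b i j)}"

definition resonance_order :: "nat \<Rightarrow> (nat \<Rightarrow> real) \<Rightarrow> nat" where
  "resonance_order n \<omega> = zrank (resonance_module n \<omega>)"

definition resonant :: "nat \<Rightarrow> (nat \<Rightarrow> real) \<Rightarrow> bool" where
  "resonant n \<omega> \<longleftrightarrow> resonance_module n \<omega> \<noteq> {\<lambda>_. 0}"

definition rational_vec :: "nat \<Rightarrow> (nat \<Rightarrow> real) \<Rightarrow> bool" where
  "rational_vec n x \<longleftrightarrow> (\<forall>i<n. x i \<in> \<rat>)"

definition period :: "nat \<Rightarrow> (nat \<Rightarrow> real) \<Rightarrow> nat" where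
  "period n x = (LEAST T. T > 0 \<and> (\<forall>i<n. real T * x i \<in> \<int>))"

definition GL_int :: "nat \<Rightarrow> (nat \<Rightarrow> nat \<Rightarrow> int) set" where
  "GL_int n = {A. \<exists>B. (\<forall>i<n. \<forall>j<n. (\<Sum>k<n. A i k * B k j) = (if i = j then 1 else 0))
                     \<and> (\<forall>i<n. \<forall>j<n. (\<Sum>k<n. B i k * A k j) = (if i = j then 1 else 0))}"

definition mat_vec :: "nat \<Rightarrow> (nat \<Rightarrow> nat \<Rightarrow> int) \<Rightarrow> (nat \<Rightarrow> real) \<Rightarrow> nat \<Rightarrow> real" where
  "mat_vec n A \<omega> = (\<lambda>i. \<Sum>j<n. of_int (A i j) * \<omega> j)"

definition std_basis :: "nat \<Rightarrow> nat \<Rightarrow> int" where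
  "std_basis i = (\<lambda>j. if j = i then 1 else 0)"

end

theory Submission
  imports Defs
begin

text \<open>Multiplying \<open>\<omega>\<close> by a unimodular matrix \<open>A\<close> transports the resonance module
  by \<open>k \<mapsto> k A\<close>, so its rank and the period are unchanged. If the tail
  \<open>(\<omega>\<^sub>s, \<dots>, \<omega>\<^sub>n\<^sub>-\<^sub>1)\<close> is resonant, Euclid's algorithm applied to a nonzero resonance
  vector \<open>k\<close> of the tail yields a unimodular \<open>A\<close> fixing the first \<open>s\<close> coordinates
  whose row \<open>s\<close> is proportional to \<open>k\<close>; so \<open>(A\<omega>)\<^sub>s\<close> is rational. Iterating, we reach
  \<open>(x, \<omega>')\<close> with \<open>x\<close> rational and \<open>\<omega>'\<close> non-resonant. Euclid's algorithm on the
  numerators of \<open>x\<close> over a common denominator concentrates \<open>x\<close> in its last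
  coordinate, giving \<open>(0, \<dots>, 0, a/T, \<omega>')\<close> with \<open>gcd(a, T) = 1\<close>. Its resonance module has
  the basis \<open>e\<^sub>0, \<dots>, e\<^sub>s\<^sub>-\<^sub>2, T e\<^sub>s\<^sub>-\<^sub>1\<close>; comparing ranks gives \<open>s = r\<close>, and
  \<open>d = (1, \<dots>, 1, T)\<close> works.\<close>

lemma if_zero_mult [simp]: "(if P then a else 0) * x = (if P then a * x else (0::'a::mult_zero))"
  by simp

lemma mult_if_zero [simp]: "x * (if P then a else 0) = (if P then x * a else (0::'a::mult_zero))"
  by simp

definition mat_mul ::
    "nat \<Rightarrow> (nat \<Rightarrow> nat \<Rightarrow> int) \<Rightarrow> (nat \<Rightarrow> nat \<Rightarrow> int) \<Rightarrow> nat \<Rightarrow> nat \<Rightarrow> int" where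
  "mat_mul n A B = (\<lambda>i j. \<Sum>k<n. A i k * B k j)"

definition id_mat :: "nat \<Rightarrow> nat \<Rightarrow> int" where
  "id_mat = (\<lambda>i j. if i = j then 1 else 0)"

definition inverse_mats :: "nat \<Rightarrow> (nat \<Rightarrow> nat \<Rightarrow> int) \<Rightarrow> (nat \<Rightarrow> nat \<Rightarrow> int) \<Rightarrow> bool" where
  "inverse_mats n A B \<longleftrightarrow>
     (\<forall>i<n. \<forall>j<n. mat_mul n A B i j = id_mat i j \<and> mat_mul n B A i j = id_mat i j)"

definition identity_outside :: "nat \<Rightarrow> nat \<Rightarrow> nat \<Rightarrow> (nat \<Rightarrow> nat \<Rightarrow> int) \<Rightarrow> bool" where
  "identity_outside n lo hi C \<longleftrightarrow>
     (\<forall>i<n. \<forall>j<n. (i \<notin> {lo..<hi} \<or> j \<notin> {lo..<hi}) \<longrightarrow> C i j = id_mat i j)"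

definition int_mat_vec :: "nat \<Rightarrow> (nat \<Rightarrow> nat \<Rightarrow> int) \<Rightarrow> (nat \<Rightarrow> int) \<Rightarrow> nat \<Rightarrow> int" where
  "int_mat_vec n A k = (\<lambda>i. \<Sum>j<n. A i j * k j)"

definition transpose_mat :: "(nat \<Rightarrow> nat \<Rightarrow> int) \<Rightarrow> nat \<Rightarrow> nat \<Rightarrow> int" where
  "transpose_mat A = (\<lambda>i j. A j i)"

lemma inverse_mats_GL_int: "inverse_mats n A B \<Longrightarrow> A \<in> GL_int n"
  unfolding inverse_mats_def GL_int_def mat_mul_def id_mat_def by blast

lemma inverse_mats_sym: "inverse_mats n A B \<Longrightarrow> inverse_mats n B A"
  unfolding inverse_mats_def by blast

lemma inverse_mats_id: "inverse_mats n id_mat id_mat"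
  unfolding inverse_mats_def mat_mul_def id_mat_def by simp

lemma inverse_mats_transpose:
  assumes "inverse_mats n A B"
  shows "inverse_mats n (transpose_mat A) (transpose_mat B)"
proof -
  have "mat_mul n (transpose_mat P) (transpose_mat Q) i j = mat_mul n Q P j i"
    for P Q :: "nat \<Rightarrow> nat \<Rightarrow> int" and i j
    unfolding mat_mul_def transpose_mat_def by (simp add: mult.commute)
  moreover have "id_mat j i = id_mat i j" for i j
    by (simp add: id_mat_def)
  ultimately show ?thesis
    using assms unfolding inverse_mats_def by metis
qed

lemma mat_mul_assoc: "mat_mul n (mat_mul n A B) C = mat_mul n A (mat_mul n B C)"
proof (intro ext)
  fix i j
  have "mat_mul n (mat_mul n A B) C i j = (\<Sum>k<n. \<Sum>l<n. A i l * B l k * C k j)"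
    unfolding mat_mul_def by (simp add: sum_distrib_right)
  also have "\<dots> = (\<Sum>l<n. \<Sum>k<n. A i l * B l k * C k j)"
    by (rule sum.swap)
  also have "\<dots> = mat_mul n A (mat_mul n B C) i j"
    unfolding mat_mul_def by (simp add: sum_distrib_left mult.assoc)
  finally show "mat_mul n (mat_mul n A B) C i j = mat_mul n A (mat_mul n B C) i j" .
qed

lemma mat_mul_id_left:
  assumes "\<forall>i<n. \<forall>j<n. X i j = id_mat i j" "i < n"
  shows "mat_mul n X B i j = B i j"
proof -
  have "mat_mul n X B i j = (\<Sum>k<n. id_mat i k * B k j)"
    unfolding mat_mul_def using assms by (intro sum.cong) auto
  then show ?thesis
    using assms(2) by (simp add: id_mat_def)
qed

lemma inverse_mats_mul:
  assumes "inverse_mats n A B" "inverse_mats n A' B'"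
  shows "inverse_mats n (mat_mul n A' A) (mat_mul n B B')"
proof -
  have cancel: "mat_mul n (mat_mul n P Q) (mat_mul n R S) i j = mat_mul n P S i j"
    if "\<forall>i<n. \<forall>j<n. mat_mul n Q R i j = id_mat i j"
    for P Q R S :: "nat \<Rightarrow> nat \<Rightarrow> int" and i j
  proof -
    have "mat_mul n (mat_mul n P Q) (mat_mul n R S) i j
        = mat_mul n P (mat_mul n (mat_mul n Q R) S) i j"
      by (simp add: mat_mul_assoc)
    also have "\<dots> = mat_mul n P S i j"
      unfolding mat_mul_def[of n P] by (intro sum.cong) (auto simp: mat_mul_id_left[OF that])
    finally show ?thesis .
  qed
  show ?thesis
    using assms unfolding inverse_mats_def by (simp add: cancel)
qed

lemma identity_outside_id: "identity_outside n lo hi id_mat"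
  unfolding identity_outside_def by simp

lemma identity_outside_transpose:
  "identity_outside n lo hi C \<Longrightarrow> identity_outside n lo hi (transpose_mat C)"
  unfolding identity_outside_def transpose_mat_def id_mat_def by auto

lemma identity_outside_mul:
  assumes "identity_outside n lo hi A" "identity_outside n lo hi B"
  shows "identity_outside n lo hi (mat_mul n A B)"
  unfolding identity_outside_def
proof (intro allI impI)
  fix i j
  assume ij: "i < n" "j < n" "i \<notin> {lo..<hi} \<or> j \<notin> {lo..<hi}"
  show "mat_mul n A B i j = id_mat i j"
  proof (cases "i \<in> {lo..<hi}")
    case False
    then have "mat_mul n A B i j = (\<Sum>k<n. id_mat i k * B k j)"
      using assms(1) ij unfolding mat_mul_def identity_outside_def by (auto intro!: sum.cong)
    also have "\<dots> = B i j"
      using ij by (simp add: id_mat_def)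
    finally show ?thesis
      using assms(2) ij False unfolding identity_outside_def by auto
  next
    case True
    then have out: "j \<notin> {lo..<hi}"
      using ij by auto
    then have "mat_mul n A B i j = (\<Sum>k<n. A i k * id_mat k j)"
      using assms(2) ij unfolding mat_mul_def identity_outside_def by (auto intro!: sum.cong)
    also have "\<dots> = A i j"
      using ij by (simp add: id_mat_def)
    finally show ?thesis
      using assms(1) ij out unfolding identity_outside_def by auto
  qed
qed

lemma int_mat_vec_mat_mul:
  "int_mat_vec n (mat_mul n A B) k i = int_mat_vec n A (int_mat_vec n B k) i"
proof -
  have "int_mat_vec n (mat_mul n A B) k i = (\<Sum>j<n. \<Sum>l<n. A i l * B l j * k j)"
    unfolding int_mat_vec_def mat_mul_def by (simp add: sum_distrib_right)
  also have "\<dots> = (\<Sum>l<n. \<Sum>j<n. A i l * B l j * k j)"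
    by (rule sum.swap)
  also have "\<dots> = int_mat_vec n A (int_mat_vec n B k) i"
    unfolding int_mat_vec_def by (simp add: sum_distrib_left mult.assoc)
  finally show ?thesis .
qed

lemma mat_vec_mat_mul:
  "mat_vec n (mat_mul n A B) w i = mat_vec n A (mat_vec n B w) i"
proof -
  have "mat_vec n (mat_mul n A B) w i
      = (\<Sum>j<n. \<Sum>l<n. of_int (A i l) * of_int (B l j) * w j)"
    unfolding mat_vec_def mat_mul_def by (simp add: sum_distrib_right)
  also have "\<dots> = (\<Sum>l<n. \<Sum>j<n. of_int (A i l) * of_int (B l j) * w j)"
    by (rule sum.swap)
  also have "\<dots> = mat_vec n A (mat_vec n B w) i"
    unfolding mat_vec_def by (simp add: sum_distrib_left mult.assoc)
  finally show ?thesis .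
qed

lemma int_mat_vec_id: "i < n \<Longrightarrow> int_mat_vec n id_mat k i = k i"
  unfolding int_mat_vec_def id_mat_def by simp

lemma mat_vec_id: "i < n \<Longrightarrow> mat_vec n id_mat w i = w i"
  unfolding mat_vec_def id_mat_def by (simp add: if_distrib[of real_of_int] cong: if_cong)

lemma int_mat_vec_inverse:
  assumes "inverse_mats n A B" "i < n"
  shows "int_mat_vec n B (int_mat_vec n A k) i = k i"
proof -
  have "int_mat_vec n B (int_mat_vec n A k) i = int_mat_vec n (mat_mul n B A) k i"
    by (simp add: int_mat_vec_mat_mul)
  also have "\<dots> = int_mat_vec n id_mat k i"
    using assms unfolding int_mat_vec_def inverse_mats_def by (intro sum.cong) auto
  finally show ?thesis
    using assms(2) by (simp add: int_mat_vec_id)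
qed

lemma mat_vec_inverse:
  assumes "inverse_mats n A B" "i < n"
  shows "mat_vec n B (mat_vec n A w) i = w i"
proof -
  have "mat_vec n B (mat_vec n A w) i = mat_vec n (mat_mul n B A) w i"
    by (simp add: mat_vec_mat_mul)
  also have "\<dots> = mat_vec n id_mat w i"
    using assms unfolding mat_vec_def inverse_mats_def by (intro sum.cong) auto
  finally show ?thesis
    using assms(2) by (simp add: mat_vec_id)
qed

lemma int_mat_vec_identity_outside:
  assumes "identity_outside n lo hi C" "i < n" "i \<notin> {lo..<hi}"
  shows "int_mat_vec n C k i = k i"
proof -
  have "int_mat_vec n C k i = int_mat_vec n id_mat k i"
    unfolding int_mat_vec_def using assms by (intro sum.cong) (auto simp: identity_outside_def)
  then show ?thesis
    using assms(2) by (simp add: int_mat_vec_id)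
qed

lemma mat_vec_identity_outside:
  assumes "identity_outside n lo hi C" "i < n" "i \<notin> {lo..<hi}"
  shows "mat_vec n C w i = w i"
proof -
  have "mat_vec n C w i = mat_vec n id_mat w i"
    unfolding mat_vec_def using assms by (intro sum.cong) (auto simp: identity_outside_def)
  then show ?thesis
    using assms(2) by (simp add: mat_vec_id)
qed

definition elementary_mat :: "nat \<Rightarrow> nat \<Rightarrow> int \<Rightarrow> nat \<Rightarrow> nat \<Rightarrow> int" where
  "elementary_mat i j c = (\<lambda>a b. id_mat a b + (if a = i \<and> b = j then c else 0))"

lemma mat_mul_elementary:
  assumes "a < n" "j < n"
  shows "mat_mul n (elementary_mat i j c) B a b = B a b + (if a = i then c * B j b else 0)"
  using assms unfolding mat_mul_def elementary_mat_def id_mat_def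
  by (simp add: sum.distrib distrib_right cong: if_cong)

lemma int_mat_vec_elementary:
  assumes "a < n" "j < n"
  shows "int_mat_vec n (elementary_mat i j c) k a = k a + (if a = i then c * k j else 0)"
  using assms unfolding int_mat_vec_def elementary_mat_def id_mat_def
  by (simp add: sum.distrib distrib_right cong: if_cong)

lemma inverse_mats_elementary:
  assumes "i \<noteq> j" "i < n" "j < n"
  shows "inverse_mats n (elementary_mat i j c) (elementary_mat i j (- c))"
  using assms unfolding inverse_mats_def
  by (simp add: mat_mul_elementary) (auto simp: elementary_mat_def id_mat_def)

lemma identity_outside_elementary:
  "i \<in> {lo..<hi} \<Longrightarrow> j \<in> {lo..<hi} \<Longrightarrow> identity_outside n lo hi (elementary_mat i j c)"
  unfolding identity_outside_def elementary_mat_def by auto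

lemma int_mat_vec_elementary_decreases:
  assumes "a \<noteq> b" "a \<in> {lo..<hi}" "b \<in> {lo..<hi}" "hi \<le> n" "k b \<noteq> 0" "\<bar>k b\<bar> \<le> \<bar>k a\<bar>"
  defines "k' \<equiv> int_mat_vec n (elementary_mat a b (- sgn (k a) * sgn (k b))) k"
  shows "(\<Sum>i\<in>{lo..<hi}. nat \<bar>k' i\<bar>) < (\<Sum>i\<in>{lo..<hi}. nat \<bar>k i\<bar>)"
proof -
  have k': "k' i = k i + (if i = a then - sgn (k a) * sgn (k b) * k b else 0)" if "i < n" for i
    using assms that unfolding k'_def by (simp add: int_mat_vec_elementary)
  have "\<bar>k' a\<bar> < \<bar>k a\<bar>"
    using assms k'[of a] by (cases "k a > 0"; cases "k b > 0") (auto simp: sgn_if)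
  moreover have "k' i = k i" if "i \<in> {lo..<hi} - {a}" for i
    using that assms k'[of i] by auto
  ultimately have "(\<Sum>i\<in>{lo..<hi}. nat \<bar>k' i\<bar>)
      = nat \<bar>k' a\<bar> + (\<Sum>i\<in>{lo..<hi} - {a}. nat \<bar>k i\<bar>)"
    using assms(2) by (simp add: sum.remove)
  also have "\<dots> < nat \<bar>k a\<bar> + (\<Sum>i\<in>{lo..<hi} - {a}. nat \<bar>k i\<bar>)"
    using \<open>\<bar>k' a\<bar> < \<bar>k a\<bar>\<close> by simp
  also have "\<dots> = (\<Sum>i\<in>{lo..<hi}. nat \<bar>k i\<bar>)"
    using assms(2) by (simp add: sum.remove)
  finally show ?thesis .
qed

lemma exists_unimodular_move_entry:
  assumes "a \<noteq> t" "a \<in> {lo..<hi}" "t \<in> {lo..<hi}" "hi \<le> n"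
  shows "\<exists>M M'. inverse_mats n M M' \<and> identity_outside n lo hi M \<and> identity_outside n lo hi M' \<and>
           (\<forall>i<n. int_mat_vec n M k i = (if i = t then k t + k a else if i = a then - k t else k i))"
proof (intro exI conjI)
  let ?M = "mat_mul n (elementary_mat a t (- 1)) (elementary_mat t a 1)"
  let ?M' = "mat_mul n (elementary_mat t a (- 1)) (elementary_mat a t 1)"
  show "inverse_mats n ?M ?M'"
    using inverse_mats_mul[OF inverse_mats_elementary[where c = 1] inverse_mats_elementary[where c = "- 1"]]
      assms by auto
  show "identity_outside n lo hi ?M" "identity_outside n lo hi ?M'"
    using assms by (simp_all add: identity_outside_mul identity_outside_elementary)
  show "\<forall>i<n. int_mat_vec n ?M k i = (if i = t then k t + k a else if i = a then - k t else k i)"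
    using assms by (simp add: int_mat_vec_mat_mul int_mat_vec_elementary)
qed

lemma exists_unimodular_reduction:
  assumes "hi \<le> n" "t \<in> {lo..<hi}"
  shows "\<exists>C B g. inverse_mats n C B \<and> identity_outside n lo hi C \<and> identity_outside n lo hi B \<and>
           (\<forall>i\<in>{lo..<hi}. int_mat_vec n C k i = (if i = t then g else 0))"
proof (induction "\<Sum>i\<in>{lo..<hi}. nat \<bar>k i\<bar>" arbitrary: k rule: less_induct)
  case less
  consider (two) a b where "a \<noteq> b" "a \<in> {lo..<hi}" "b \<in> {lo..<hi}" "k b \<noteq> 0" "\<bar>k b\<bar> \<le> \<bar>k a\<bar>"
    | (one) a where "a \<noteq> t" "a \<in> {lo..<hi}" "\<forall>i\<in>{lo..<hi}. i \<noteq> a \<longrightarrow> k i = 0"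
    | (none) "\<forall>i\<in>{lo..<hi}. i \<noteq> t \<longrightarrow> k i = 0"
  proof (cases "\<exists>a\<in>{lo..<hi}. \<exists>b\<in>{lo..<hi}. a \<noteq> b \<and> k a \<noteq> 0 \<and> k b \<noteq> 0")
    case True
    then show ?thesis
      using that(1) by (metis linorder_le_cases)
  next
    case False
    then show ?thesis
      using that(2,3) by blast
  qed
  then show ?case
  proof cases
    case two
    define c where "c = - sgn (k a) * sgn (k b)"
    have ab: "a < n" "b < n"
      using two assms by auto
    have "(\<Sum>i\<in>{lo..<hi}. nat \<bar>int_mat_vec n (elementary_mat a b c) k i\<bar>)
        < (\<Sum>i\<in>{lo..<hi}. nat \<bar>k i\<bar>)"
      unfolding c_def using two assms by (intro int_mat_vec_elementary_decreases)
    then obtain C B g where CB: "inverse_mats n C B" "identity_outside n lo hi C"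
        "identity_outside n lo hi B"
        "\<forall>i\<in>{lo..<hi}. int_mat_vec n C (int_mat_vec n (elementary_mat a b c) k) i
           = (if i = t then g else 0)"
      using less by blast
    show ?thesis
    proof (intro exI conjI)
      show "inverse_mats n (mat_mul n C (elementary_mat a b c)) (mat_mul n (elementary_mat a b (- c)) B)"
        using inverse_mats_mul[OF inverse_mats_elementary[OF two(1) ab] CB(1)] .
      show "identity_outside n lo hi (mat_mul n C (elementary_mat a b c))"
        "identity_outside n lo hi (mat_mul n (elementary_mat a b (- c)) B)"
        using two CB by (simp_all add: identity_outside_mul identity_outside_elementary)
      show "\<forall>i\<in>{lo..<hi}. int_mat_vec n (mat_mul n C (elementary_mat a b c)) k i
          = (if i = t then g else 0)"
        using CB(4) by (simp add: int_mat_vec_mat_mul)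
    qed
  next
    case one
    then obtain M M' where M: "inverse_mats n M M'" "identity_outside n lo hi M"
        "identity_outside n lo hi M'"
        "\<forall>i<n. int_mat_vec n M k i = (if i = t then k t + k a else if i = a then - k t else k i)"
      using exists_unimodular_move_entry[of a t lo hi n k] assms by blast
    have "\<forall>i\<in>{lo..<hi}. int_mat_vec n M k i = (if i = t then k a else 0)"
      using M(4) one assms by auto
    then show ?thesis
      using M(1-3) by blast
  next
    case none
    then show ?thesis
      using assms inverse_mats_id identity_outside_id by (force simp: int_mat_vec_id)
  qed
qed

lemma scaled_std_basis_combination:
  "(\<Sum>i<s. c i * (d i * std_basis i j)) = (if j < s then c j * d j else (0::int))"
  by (simp add: std_basis_def cong: if_cong)

lemma zlin_indep_scaled_std_basis:
  assumes "\<forall>i<s. d i \<noteq> 0"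
  shows "zlin_indep s (\<lambda>i j. d i * std_basis i j)"
  unfolding zlin_indep_def
proof (intro allI impI)
  fix c :: "nat \<Rightarrow> int" and i
  assume "\<forall>j. (\<Sum>i<s. c i * (d i * std_basis i j)) = 0" "i < s"
  then show "c i = 0"
    using assms by (metis scaled_std_basis_combination mult_eq_0_iff)
qed

text \<open>Fraction-free Gaussian elimination of the last coordinate.\<close>

lemma exists_int_relation:
  assumes "finite I" "card I > s" "\<forall>i\<in>I. \<forall>j\<ge>s. b i j = (0::int)"
  shows "\<exists>c. (\<forall>j. (\<Sum>i\<in>I. c i * b i j) = 0) \<and> (\<exists>i\<in>I. c i \<noteq> 0)"
  using assms
proof (induction s arbitrary: I b)
  case 0
  then obtain i0 where "i0 \<in> I"
    by (metis card.empty ex_in_conv less_irrefl)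
  then show ?case
    using 0 by (intro exI[of _ "\<lambda>i. if i = i0 then 1 else 0"]) auto
next
  case (Suc s)
  show ?case
  proof (cases "\<forall>i\<in>I. b i s = 0")
    case True
    then have "\<forall>i\<in>I. \<forall>j\<ge>s. b i j = 0"
      using Suc.prems(3) by (metis Suc_leI le_neq_implies_less)
    then show ?thesis
      using Suc.IH[OF Suc.prems(1)] Suc.prems(2) by simp
  next
    case False
    then obtain p where p: "p \<in> I" "b p s \<noteq> 0"
      by blast
    define b' where "b' = (\<lambda>i j. b p s * b i j - b i s * b p j)"
    have "\<forall>i\<in>I - {p}. \<forall>j\<ge>s. b' i j = 0"
    proof (intro ballI allI impI)
      fix i j
      assume "i \<in> I - {p}" "s \<le> j"
      then show "b' i j = 0"
        using Suc.prems(3) p by (cases "j = s") (auto simp: b'_def)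
    qed
    moreover have "card (I - {p}) > s"
      using Suc.prems(1,2) p by simp
    ultimately obtain c' where c': "\<forall>j. (\<Sum>i\<in>I - {p}. c' i * b' i j) = 0"
        "\<exists>i\<in>I - {p}. c' i \<noteq> 0"
      using Suc.IH[of "I - {p}" b'] Suc.prems(1) by auto
    define c where
      "c = (\<lambda>i. if i = p then - (\<Sum>k\<in>I - {p}. c' k * b k s) else c' i * b p s)"
    have "(\<Sum>i\<in>I. c i * b i j) = 0" for j
    proof -
      have "(\<Sum>i\<in>I. c i * b i j) = c p * b p j + (\<Sum>i\<in>I - {p}. c i * b i j)"
        using Suc.prems(1) p(1) by (rule sum.remove)
      also have "(\<Sum>i\<in>I - {p}. c i * b i j) = (\<Sum>i\<in>I - {p}. c' i * b p s * b i j)"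
        by (intro sum.cong) (auto simp: c_def)
      also have "c p * b p j = - (\<Sum>i\<in>I - {p}. c' i * b i s * b p j)"
        by (simp add: c_def sum_distrib_right)
      finally have "(\<Sum>i\<in>I. c i * b i j)
          = (\<Sum>i\<in>I - {p}. c' i * b p s * b i j - c' i * b i s * b p j)"
        by (simp add: sum_subtractf)
      also have "\<dots> = (\<Sum>i\<in>I - {p}. c' i * b' i j)"
        by (intro sum.cong) (auto simp: b'_def algebra_simps)
      finally show ?thesis
        using c'(1) by simp
    qed
    moreover obtain i0 where "i0 \<in> I - {p}" "c' i0 \<noteq> 0"
      using c'(2) by blast
    then have "i0 \<in> I" "c i0 \<noteq> 0"
      using p by (auto simp: c_def)
    ultimately show ?thesis
      by blast
  qed
qed

lemma zrank_scaled_std_span: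
  assumes "\<forall>i<s. d i \<noteq> (0::int)"
  shows "zrank {v. \<exists>c. v = (\<lambda>j. \<Sum>i<s. c i * (d i * std_basis i j))} = s"
  unfolding zrank_def
proof (rule Greatest_equality)
  let ?M = "{v. \<exists>c. v = (\<lambda>j. \<Sum>i<s. c i * (d i * std_basis i j))}"
  have "(\<lambda>j. d i * std_basis i j) \<in> ?M" if "i < s" for i
    unfolding mem_Collect_eq
    by (rule exI[of _ "\<lambda>k. if k = i then 1 else 0"])
      (use that in \<open>auto simp: std_basis_def cong: if_cong\<close>)
  then show "\<exists>b. (\<forall>i<s. b i \<in> ?M) \<and> zlin_indep s b"
    using zlin_indep_scaled_std_basis[OF assms] by (intro exI[of _ "\<lambda>i j. d i * std_basis i j"]) simp
next
  fix m
  assume "\<exists>b. (\<forall>i<m. b i \<in> {v. \<exists>c. v = (\<lambda>j. \<Sum>i<s. c i * (d i * std_basis i j))})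
    \<and> zlin_indep m b"
  then obtain b where b: "\<forall>i<m. \<exists>c. b i = (\<lambda>j. \<Sum>i<s. c i * (d i * std_basis i j))"
      "zlin_indep m b"
    by auto
  show "m \<le> s"
  proof (rule ccontr)
    assume "\<not> m \<le> s"
    moreover have "\<forall>i\<in>{..<m}. \<forall>j\<ge>s. b i j = 0"
      using b(1) by (auto simp: scaled_std_basis_combination)
    ultimately obtain c where "\<forall>j. (\<Sum>i<m. c i * b i j) = 0" "\<exists>i<m. c i \<noteq> 0"
      using exists_int_relation[of "{..<m}" s b] by auto
    then show False
      using b(2) unfolding zlin_indep_def by blast
  qed
qed

lemma resonance_module_cong:
  assumes "\<And>i. i < n \<Longrightarrow> w i = w' i"
  shows "resonance_module n w = resonance_module n w'"
proof -
  have "(\<Sum>i<n. of_int (k i) * w i) = (\<Sum>i<n. of_int (k i) * w' i)" for k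
    using assms by (intro sum.cong) auto
  then show ?thesis
    unfolding resonance_module_def by simp
qed

lemma resonant_cong: "(\<And>i. i < n \<Longrightarrow> w i = w' i) \<Longrightarrow> resonant n w \<longleftrightarrow> resonant n w'"
  unfolding resonant_def by (metis resonance_module_cong)

definition vec_mat :: "nat \<Rightarrow> (nat \<Rightarrow> nat \<Rightarrow> int) \<Rightarrow> (nat \<Rightarrow> int) \<Rightarrow> nat \<Rightarrow> int" where
  "vec_mat n A k = (\<lambda>j. if j < n then \<Sum>i<n. k i * A i j else 0)"

lemma vec_mat_zvec: "vec_mat n A k \<in> zvec n"
  unfolding vec_mat_def zvec_def by auto

lemma vec_mat_inner:
  "(\<Sum>j<n. of_int (vec_mat n A k j) * w j) = (\<Sum>i<n. of_int (k i) * mat_vec n A w i)"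
proof -
  have "(\<Sum>j<n. of_int (vec_mat n A k j) * w j) = (\<Sum>j<n. \<Sum>i<n. of_int (k i) * of_int (A i j) * w j)"
    unfolding vec_mat_def by (simp add: sum_distrib_right)
  also have "\<dots> = (\<Sum>i<n. \<Sum>j<n. of_int (k i) * of_int (A i j) * w j)"
    by (rule sum.swap)
  also have "\<dots> = (\<Sum>i<n. of_int (k i) * mat_vec n A w i)"
    unfolding mat_vec_def by (simp add: sum_distrib_left mult.assoc)
  finally show ?thesis .
qed

lemma vec_mat_resonance_module:
  "k \<in> resonance_module n (mat_vec n A w) \<Longrightarrow> vec_mat n A k \<in> resonance_module n w"
  unfolding resonance_module_def by (simp add: vec_mat_zvec vec_mat_inner)

lemma vec_mat_inverse:
  assumes "inverse_mats n A B" "v \<in> zvec n"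
  shows "vec_mat n B (vec_mat n A v) = v"
proof
  fix j
  show "vec_mat n B (vec_mat n A v) j = v j"
  proof (cases "j < n")
    case True
    have "vec_mat n B (vec_mat n A v) j = (\<Sum>l<n. \<Sum>i<n. v i * A i l * B l j)"
      unfolding vec_mat_def using True by (simp add: sum_distrib_right)
    also have "\<dots> = (\<Sum>i<n. \<Sum>l<n. v i * A i l * B l j)"
      by (rule sum.swap)
    also have "\<dots> = (\<Sum>i<n. v i * mat_mul n A B i j)"
      unfolding mat_mul_def by (simp add: sum_distrib_left mult.assoc)
    also have "\<dots> = (\<Sum>i<n. v i * id_mat i j)"
      using assms(1) True by (intro sum.cong) (auto simp: inverse_mats_def)
    finally show ?thesis
      using True by (simp add: id_mat_def)
  next
    case False
    then show ?thesis
      using assms(2) by (simp add: vec_mat_def zvec_def)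
  qed
qed

lemma vec_mat_combination:
  "vec_mat n A (\<lambda>j. \<Sum>i<m. c i * b i j) = (\<lambda>j. \<Sum>i<m. c i * vec_mat n A (b i) j)"
proof
  fix j
  show "vec_mat n A (\<lambda>j. \<Sum>i<m. c i * b i j) j = (\<Sum>i<m. c i * vec_mat n A (b i) j)"
  proof (cases "j < n")
    case True
    have "vec_mat n A (\<lambda>j. \<Sum>i<m. c i * b i j) j = (\<Sum>l<n. \<Sum>i<m. c i * b i l * A l j)"
      unfolding vec_mat_def using True by (simp add: sum_distrib_right)
    also have "\<dots> = (\<Sum>i<m. \<Sum>l<n. c i * b i l * A l j)"
      by (rule sum.swap)
    finally show ?thesis
      using True by (simp add: vec_mat_def sum_distrib_left mult.assoc)
  qed (simp add: vec_mat_def)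
qed

lemma zlin_indep_vec_mat:
  assumes "inverse_mats n A B" "\<forall>i<m. b i \<in> zvec n" "zlin_indep m b"
  shows "zlin_indep m (\<lambda>i. vec_mat n A (b i))"
  unfolding zlin_indep_def
proof (intro allI impI)
  fix c :: "nat \<Rightarrow> int" and i
  assume rel: "\<forall>j. (\<Sum>i<m. c i * vec_mat n A (b i) j) = 0" and "i < m"
  define v where "v = (\<lambda>j. \<Sum>i<m. c i * b i j)"
  have "v \<in> zvec n"
    using assms(2) by (auto simp: v_def zvec_def)
  moreover have "vec_mat n A v = (\<lambda>_. 0)"
    using rel by (simp add: v_def vec_mat_combination)
  ultimately have "v = vec_mat n B (\<lambda>_. 0)"
    using vec_mat_inverse[OF assms(1)] by metis
  then have "\<forall>j. (\<Sum>i<m. c i * b i j) = 0"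
    by (simp add: v_def vec_mat_def fun_eq_iff)
  then show "c i = 0"
    using assms(3) \<open>i < m\<close> unfolding zlin_indep_def by blast
qed

lemma zrank_resonance_module_mat_vec:
  assumes "inverse_mats n A B"
  shows "zrank (resonance_module n (mat_vec n A w)) = zrank (resonance_module n w)"
proof -
  have transfer: "\<exists>b'. (\<forall>i<m. b' i \<in> resonance_module n w) \<and> zlin_indep m b'"
    if "inverse_mats n A B" "\<forall>i<m. b i \<in> resonance_module n (mat_vec n A w)" "zlin_indep m b"
    for A B w m b
    using that vec_mat_resonance_module zlin_indep_vec_mat[of n A B m b]
    by (intro exI[of _ "\<lambda>i. vec_mat n A (b i)"]) (auto simp: resonance_module_def)
  have "resonance_module n (mat_vec n B (mat_vec n A w)) = resonance_module n w"
    by (rule resonance_module_cong) (simp add: mat_vec_inverse[OF assms])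
  then have "(\<exists>b. (\<forall>i<m. b i \<in> resonance_module n (mat_vec n A w)) \<and> zlin_indep m b)
      \<longleftrightarrow> (\<exists>b. (\<forall>i<m. b i \<in> resonance_module n w) \<and> zlin_indep m b)" for m
    using transfer[OF assms] transfer[OF inverse_mats_sym[OF assms], where w = "mat_vec n A w" and m = m]
    by metis
  then show ?thesis
    unfolding zrank_def by simp
qed

lemma period_mat_vec:
  assumes "inverse_mats n A B"
  shows "period n (mat_vec n A w) = period n w"
proof -
  have integral: "\<forall>i<n. real T * mat_vec n X v i \<in> \<int>" if "\<forall>i<n. real T * v i \<in> \<int>" for X v T
  proof (intro allI impI)
    fix i
    have "real T * mat_vec n X v i = (\<Sum>j<n. of_int (X i j) * (real T * v j))"
      unfolding mat_vec_def by (simp add: sum_distrib_left mult.left_commute)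
    also have "\<dots> \<in> \<int>"
      using that by (intro Ints_sum Ints_mult[OF Ints_of_int]) auto
    finally show "real T * mat_vec n X v i \<in> \<int>" .
  qed
  have "(\<forall>i<n. real T * mat_vec n A w i \<in> \<int>) \<longleftrightarrow> (\<forall>i<n. real T * w i \<in> \<int>)" for T
    using integral[of T "mat_vec n A w" B] integral[of T w A] mat_vec_inverse[OF assms] by auto
  then show ?thesis
    unfolding period_def by simp
qed

lemma sum_lessThan_split:
  fixes f :: "nat \<Rightarrow> 'a::comm_monoid_add"
  assumes "s \<le> n"
  shows "(\<Sum>i<n. f i) = (\<Sum>i<s. f i) + (\<Sum>j<n - s. f (s + j))"
proof -
  have "(\<Sum>i<n. f i) = (\<Sum>i<s. f i) + (\<Sum>i\<in>{s..<n}. f i)"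
    using assms by (metis atLeast0LessThan le0 sum.atLeastLessThan_concat)
  also have "(\<Sum>i\<in>{s..<n}. f i) = (\<Sum>j<n - s. f (s + j))"
    using assms sum.shift_bounds_nat_ivl[of f 0 s "n - s"] by (simp add: atLeast0LessThan add.commute)
  finally show ?thesis .
qed

lemma exists_unimodular_rational_coordinate:
  assumes "s < n" "k \<in> zvec n" "k \<noteq> (\<lambda>_. 0)" "\<forall>i<s. k i = 0"
    and "(\<Sum>i<n. of_int (k i) * w i) \<in> \<int>"
  shows "\<exists>A B. inverse_mats n A B \<and> identity_outside n s n A \<and> mat_vec n A w s \<in> \<rat>"
proof -
  obtain C B g where CB: "inverse_mats n C B" "identity_outside n s n C" "identity_outside n s n B"
      "\<forall>i\<in>{s..<n}. int_mat_vec n C k i = (if i = s then g else 0)"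
    using exists_unimodular_reduction[of n n s s k] assms(1) by auto
  have Ck: "int_mat_vec n C k i = (if i = s then g else 0)" if "i < n" for i
    using CB(4) int_mat_vec_identity_outside[OF CB(2) that] assms(4) that by (cases "s \<le> i") auto
  have k: "k j = B j s * g" if "j < n" for j
  proof -
    have "k j = int_mat_vec n B (int_mat_vec n C k) j"
      using int_mat_vec_inverse[OF CB(1) that] by simp
    also have "\<dots> = B j s * g"
      unfolding int_mat_vec_def[of n B] using assms(1) by (simp add: Ck cong: if_cong)
    finally show ?thesis .
  qed
  have "g \<noteq> 0"
    using assms(2,3) k by (auto simp: zvec_def fun_eq_iff) (metis not_le)
  text \<open>Row \<open>s\<close> of \<open>A = (C\<^sup>-\<^sup>1)\<^sup>T\<close> is \<open>k / g\<close>, so \<open>(A w)\<^sub>s = \<langle>k, w\<rangle> / g\<close>.\<close>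
  define A where "A = transpose_mat B"
  have "of_int g * mat_vec n A w s = (\<Sum>j<n. of_int (k j) * w j)"
    unfolding mat_vec_def A_def transpose_mat_def
    by (simp add: sum_distrib_left k mult.commute mult.left_commute)
  then have "mat_vec n A w s = (\<Sum>j<n. of_int (k j) * w j) / of_int g"
    using \<open>g \<noteq> 0\<close> by (simp add: field_simps)
  also have "\<dots> \<in> \<rat>"
    using assms(5) Ints_subset_Rats by (intro Rats_divide) auto
  finally show ?thesis
    using inverse_mats_transpose[OF inverse_mats_sym[OF CB(1)]] identity_outside_transpose[OF CB(3)]
    unfolding A_def by blast
qed

lemma exists_unimodular_rational_head:
  assumes "s \<le> n" "\<forall>i<s. w i \<in> \<rat>"
  shows "\<exists>A B s'. inverse_mats n A B \<and> s \<le> s' \<and> s' \<le> n \<and> (\<forall>i<s'. mat_vec n A w i \<in> \<rat>) \<and>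
           \<not> resonant (n - s') (\<lambda>i. mat_vec n A w (s' + i))"
  using assms
proof (induction "n - s" arbitrary: s w rule: less_induct)
  case less
  show ?case
  proof (cases "resonant (n - s) (\<lambda>i. w (s + i))")
    case False
    then have "\<not> resonant (n - s) (\<lambda>i. mat_vec n id_mat w (s + i))"
      using resonant_cong[of "n - s" "\<lambda>i. mat_vec n id_mat w (s + i)"] by (simp add: mat_vec_id)
    then show ?thesis
      using inverse_mats_id less.prems by (force simp: mat_vec_id)
  next
    case True
    then obtain k' where k': "k' \<in> resonance_module (n - s) (\<lambda>i. w (s + i))" "k' \<noteq> (\<lambda>_. 0)"
      unfolding resonant_def resonance_module_def zvec_def by auto
    then have "s < n"
      by (auto simp: resonance_module_def zvec_def fun_eq_iff)
    define k where "k = (\<lambda>i. if s \<le> i then k' (i - s) else 0)"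
    have "k \<in> zvec n" "k \<noteq> (\<lambda>_. 0)" "\<forall>i<s. k i = 0"
      using k' by (auto simp: k_def zvec_def resonance_module_def fun_eq_iff) (metis add_diff_cancel_left' le_add1)
    moreover have "(\<Sum>i<n. of_int (k i) * w i) \<in> \<int>"
      using sum_lessThan_split[where f = "\<lambda>i. of_int (k i) * w i" and s = s and n = n] \<open>s < n\<close> k'(1)
      by (simp add: k_def resonance_module_def)
    ultimately obtain A1 B1 where A1: "inverse_mats n A1 B1" "identity_outside n s n A1"
        "mat_vec n A1 w s \<in> \<rat>"
      using exists_unimodular_rational_coordinate[OF \<open>s < n\<close>] by blast
    have "\<forall>i<Suc s. mat_vec n A1 w i \<in> \<rat>"
      using A1 less.prems(2) \<open>s < n\<close> by (auto simp: less_Suc_eq mat_vec_identity_outside)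
    then have "\<exists>A2 B2 s'. inverse_mats n A2 B2 \<and> Suc s \<le> s' \<and> s' \<le> n \<and>
        (\<forall>i<s'. mat_vec n A2 (mat_vec n A1 w) i \<in> \<rat>) \<and>
        \<not> resonant (n - s') (\<lambda>i. mat_vec n A2 (mat_vec n A1 w) (s' + i))"
      using less.hyps[of "Suc s" "mat_vec n A1 w"] \<open>s < n\<close> by auto
    then obtain A2 B2 s' where A2: "inverse_mats n A2 B2" "Suc s \<le> s'" "s' \<le> n"
        "\<forall>i<s'. mat_vec n A2 (mat_vec n A1 w) i \<in> \<rat>"
        "\<not> resonant (n - s') (\<lambda>i. mat_vec n A2 (mat_vec n A1 w) (s' + i))"
      by blast
    show ?thesis
      using inverse_mats_mul[OF A1(1) A2(1)] A2
      by (intro exI[of _ "mat_mul n A2 A1"] exI[of _ "mat_mul n B1 B2"] exI[of _ s'])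
        (simp add: mat_vec_mat_mul)
  qed
qed

lemma Rats_common_denominator:
  fixes x :: "nat \<Rightarrow> 'a::field_char_0"
  assumes "\<forall>i<s. x i \<in> \<rat>"
  shows "\<exists>L > 0. \<exists>p. \<forall>i<s. x i = of_int (p i) / of_int L"
  using assms
proof (induction s)
  case 0
  show ?case
    by (rule exI[of _ 1]) simp
next
  case (Suc s)
  then obtain L p where L: "L > 0" "\<forall>i<s. x i = of_int (p i) / of_int L"
    by auto
  obtain a b where ab: "b > 0" "x s = of_int a / of_int b"
    using Suc.prems by (meson Rats_cases' lessI)
  define q where "q = (\<lambda>i. if i = s then a * L else p i * b)"
  have "\<forall>i<Suc s. x i = of_int (q i) / of_int (L * b)"
    using L ab by (auto simp: q_def less_Suc_eq)
  moreover have "L * b > 0"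
    using L ab by simp
  ultimately show ?case
    by blast
qed

lemma exists_unimodular_concentration:
  assumes "1 \<le> s" "s \<le> n" "\<forall>i<s. x i \<in> \<rat>"
  shows "\<exists>C B a T. inverse_mats n C B \<and> identity_outside n 0 s C \<and> T > 0 \<and> coprime a (int T) \<and>
           (\<forall>i<s. mat_vec n C x i = (if i = s - 1 then of_int a / of_nat T else 0))"
proof -
  obtain L p where L: "L > 0" "\<forall>i<s. x i = of_int (p i) / of_int L"
    using Rats_common_denominator[OF assms(3)] by blast
  obtain C B g where CB: "inverse_mats n C B" "identity_outside n 0 s C"
      "\<forall>i\<in>{0..<s}. int_mat_vec n C p i = (if i = s - 1 then g else 0)"
    using exists_unimodular_reduction[of s n "s - 1" 0 p] assms(1,2) by auto
  have Cx: "mat_vec n C x i = (if i = s - 1 then of_int g / of_int L else 0)" if "i < s" for i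
  proof -
    have "C i j = 0" if "s \<le> j" "j < n" for j
      using CB(2) \<open>i < s\<close> that assms(2) by (auto simp: identity_outside_def id_mat_def)
    then have "of_int (C i j) * x j = of_int (C i j * p j) / of_int L" if "j < n" for j
      using L(2) that by (cases "j < s") auto
    then have "mat_vec n C x i = (\<Sum>j<n. of_int (C i j * p j) / of_int L)"
      unfolding mat_vec_def by (intro sum.cong) auto
    also have "\<dots> = of_int (int_mat_vec n C p i) / of_int L"
      unfolding int_mat_vec_def by (simp add: sum_divide_distrib)
    finally show ?thesis
      using CB(3) that by simp
  qed
  obtain a b where ab: "b > 0" "coprime a b" "of_int g / of_int L = (of_int a / of_int b :: real)"
    by (meson Rats_cases' Rats_divide Rats_of_int)
  show ?thesis
    using CB Cx ab by (intro exI[of _ C] exI[of _ B] exI[of _ a] exI[of _ "nat b"]) auto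
qed

definition normal_form_scales :: "nat \<Rightarrow> nat \<Rightarrow> nat \<Rightarrow> int" where
  "normal_form_scales s T = (\<lambda>i. if i = s - 1 then int T else 1)"

definition resonance_normal_form :: "nat \<Rightarrow> nat \<Rightarrow> int \<Rightarrow> nat \<Rightarrow> (nat \<Rightarrow> real) \<Rightarrow> bool" where
  "resonance_normal_form n s a T y \<longleftrightarrow> 1 \<le> s \<and> s \<le> n \<and> T > 0 \<and> coprime a (int T) \<and>
     (\<forall>i<s. y i = (if i = s - 1 then of_int a / of_nat T else 0)) \<and>
     \<not> resonant (n - s) (\<lambda>i. y (s + i))"

lemma normal_form_inner:
  assumes "resonance_normal_form n s a T y"
  shows "(\<Sum>i<n. of_int (k i) * y i)
       = of_int (k (s - 1) * a) / of_nat T + (\<Sum>j<n - s. of_int (k (s + j)) * y (s + j))"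
proof -
  have "(\<Sum>i<s. of_int (k i) * y i) = of_int (k (s - 1) * a) / of_nat T"
    using assms by (simp add: resonance_normal_form_def cong: if_cong)
  then show ?thesis
    using sum_lessThan_split[where f = "\<lambda>i. of_int (k i) * y i" and s = s and n = n] assms
    by (simp add: resonance_normal_form_def)
qed

lemma normal_form_tail_vanishes:
  assumes nf: "resonance_normal_form n s a T y" and k: "k \<in> resonance_module n y" and "s \<le> j"
  shows "k j = 0"
proof (cases "j < n")
  case True
  text \<open>Multiplying by \<open>T\<close> clears the rational head, leaving a resonance of the tail.\<close>
  define K where "K = (\<lambda>i. if i < n - s then int T * k (s + i) else 0)"
  have "(\<Sum>i<n - s. of_int (K i) * y (s + i))
      = of_nat T * (\<Sum>i<n. of_int (k i) * y i) - of_int (k (s - 1) * a)"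
    using normal_form_inner[OF nf, of k] nf
    by (simp add: K_def sum_distrib_left mult.assoc resonance_normal_form_def field_simps)
  also have "\<dots> \<in> \<int>"
    using k by (simp add: resonance_module_def)
  finally have "K \<in> resonance_module (n - s) (\<lambda>i. y (s + i))"
    by (simp add: resonance_module_def zvec_def K_def)
  then have "K = (\<lambda>_. 0)"
    using nf unfolding resonance_normal_form_def resonant_def by blast
  then have "int T * k (s + (j - s)) = 0"
    using True \<open>s \<le> j\<close> unfolding K_def by (metis diff_less_mono)
  then show ?thesis
    using nf \<open>s \<le> j\<close> by (simp add: resonance_normal_form_def)
next
  case False
  then show ?thesis
    using k by (simp add: resonance_module_def zvec_def)
qed

lemma resonance_module_normal_form:
  assumes nf: "resonance_normal_form n s a T y"
  shows "resonance_module n y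
       = {v. \<exists>c. v = (\<lambda>j. \<Sum>i<s. c i * (normal_form_scales s T i * std_basis i j))}"
proof (intro set_eqI iffI)
  fix k
  assume k: "k \<in> resonance_module n y"
  have tail: "k j = 0" if "s \<le> j" for j
    using normal_form_tail_vanishes[OF nf k that] .
  have "of_int (k (s - 1) * a) / of_nat T = (\<Sum>i<n. of_int (k i) * y i)"
    using normal_form_inner[OF nf, of k] tail by simp
  also have "\<dots> \<in> \<int>"
    using k by (simp add: resonance_module_def)
  finally obtain z where "of_int (k (s - 1) * a) = of_int z * (of_nat T :: real)"
    using nf by (auto simp: resonance_normal_form_def field_simps elim!: Ints_cases)
  then have "int T dvd k (s - 1) * a"
    by (metis dvd_triv_right of_int_eq_iff of_int_mult of_int_of_nat_eq)
  then have "int T dvd k (s - 1)"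
    using nf by (simp add: resonance_normal_form_def coprime_commute coprime_dvd_mult_left_iff)
  moreover define c where "c = (\<lambda>i. if i = s - 1 then k i div int T else k i)"
  ultimately have "k = (\<lambda>j. \<Sum>i<s. c i * (normal_form_scales s T i * std_basis i j))"
    using tail by (auto simp: scaled_std_basis_combination normal_form_scales_def fun_eq_iff not_le)
  then show "k \<in> {v. \<exists>c. v = (\<lambda>j. \<Sum>i<s. c i * (normal_form_scales s T i * std_basis i j))}"
    by blast
next
  fix v
  assume "v \<in> {v. \<exists>c. v = (\<lambda>j. \<Sum>i<s. c i * (normal_form_scales s T i * std_basis i j))}"
  then obtain c where v: "v j = (if j < s then c j * normal_form_scales s T j else 0)" for j
    by (auto simp: scaled_std_basis_combination)
  have "v \<in> zvec n"
    using nf by (auto simp: v zvec_def resonance_normal_form_def)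
  moreover have "(\<Sum>i<n. of_int (v i) * y i) = of_int (c (s - 1) * a)"
    using normal_form_inner[OF nf, of v] nf by (simp add: v normal_form_scales_def resonance_normal_form_def)
  ultimately show "v \<in> resonance_module n y"
    by (simp add: resonance_module_def)
qed

lemma is_zbasis_resonance_module_normal_form:
  assumes "resonance_normal_form n s a T y"
  shows "is_zbasis (resonance_module n y) s (\<lambda>i j. normal_form_scales s T i * std_basis i j)"
proof -
  have "\<forall>i<s. normal_form_scales s T i \<noteq> 0"
    using assms by (simp add: normal_form_scales_def resonance_normal_form_def)
  then show ?thesis
    unfolding is_zbasis_def resonance_module_normal_form[OF assms]
    by (simp add: zlin_indep_scaled_std_basis)
qed

lemma zrank_resonance_module_normal_form:
  "resonance_normal_form n s a T y \<Longrightarrow> zrank (resonance_module n y) = s"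
  by (simp add: resonance_module_normal_form zrank_scaled_std_span normal_form_scales_def
      resonance_normal_form_def)

lemma period_normal_form:
  assumes nf: "resonance_normal_form n s a T y"
  shows "period s y = T"
  unfolding period_def
proof (rule Least_equality)
  show "0 < T \<and> (\<forall>i<s. real T * y i \<in> \<int>)"
    using nf by (auto simp: resonance_normal_form_def)
next
  fix T'
  assume T': "0 < T' \<and> (\<forall>i<s. real T' * y i \<in> \<int>)"
  then have "real T' * (of_int a / of_nat T) \<in> \<int>"
    using nf by (auto simp: resonance_normal_form_def dest!: spec[of _ "s - 1"])
  then obtain z where "of_int (int T' * a) = of_int z * (of_nat T :: real)"
    using nf by (auto simp: resonance_normal_form_def field_simps elim!: Ints_cases)
  then have "int T dvd int T' * a"
    by (metis dvd_triv_right of_int_eq_iff of_int_mult of_int_of_nat_eq)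
  then have "int T dvd int T'"
    using nf by (simp add: resonance_normal_form_def coprime_commute coprime_dvd_mult_left_iff)
  then show "T \<le> T'"
    using T' by (simp add: dvd_imp_le)
qed

lemma exists_unimodular_normal_form:
  assumes "zrank (resonance_module n \<omega>) = r" "1 \<le> r"
  shows "\<exists>A B a T. inverse_mats n A B \<and> resonance_normal_form n r a T (mat_vec n A \<omega>)"
proof -
  obtain A1 B1 s where A1: "inverse_mats n A1 B1" "s \<le> n" "\<forall>i<s. mat_vec n A1 \<omega> i \<in> \<rat>"
      "\<not> resonant (n - s) (\<lambda>i. mat_vec n A1 \<omega> (s + i))"
    using exists_unimodular_rational_head[of 0 n \<omega>] by auto
  define x where "x = mat_vec n A1 \<omega>"
  have rank: "zrank (resonance_module n x) = r"
    using zrank_resonance_module_mat_vec[OF A1(1)] assms(1) by (simp add: x_def)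
  have "1 \<le> s"
  proof (rule ccontr)
    assume "\<not> 1 \<le> s"
    then have "s = 0"
      by simp
    then have "resonance_module n x = {v. \<exists>c. v = (\<lambda>j. \<Sum>i<0. c i * (1 * std_basis i j))}"
      using A1(4) by (simp add: x_def resonant_def)
    then show False
      using rank assms(2) zrank_scaled_std_span[of 0 "\<lambda>_. 1"] by simp
  qed
  then obtain C B2 a T where C: "inverse_mats n C B2" "identity_outside n 0 s C" "T > 0"
      "coprime a (int T)" "\<forall>i<s. mat_vec n C x i = (if i = s - 1 then of_int a / of_nat T else 0)"
    using exists_unimodular_concentration[of s n x] A1(2,3) by (auto simp: x_def)
  have "\<not> resonant (n - s) (\<lambda>i. mat_vec n C x (s + i))"
    using A1(4) resonant_cong[of "n - s" "\<lambda>i. mat_vec n C x (s + i)" "\<lambda>i. x (s + i)"]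
    by (simp add: x_def mat_vec_identity_outside[OF C(2)])
  moreover have "mat_vec n (mat_mul n C A1) \<omega> = mat_vec n C x"
    by (simp add: x_def fun_eq_iff mat_vec_mat_mul)
  ultimately have nf: "resonance_normal_form n s a T (mat_vec n (mat_mul n C A1) \<omega>)"
    using \<open>1 \<le> s\<close> A1(2) C by (simp add: resonance_normal_form_def)
  moreover have "s = r"
    using zrank_resonance_module_normal_form[OF nf] assms(1)
      zrank_resonance_module_mat_vec[OF inverse_mats_mul[OF A1(1) C(1)]]
    by simp
  ultimately show ?thesis
    using inverse_mats_mul[OF A1(1) C(1)] by blast
qed

theorem proposition3p3:
  fixes n r :: nat and \<omega> :: "nat \<Rightarrow> real"
  assumes "resonant n \<omega>"
    and "resonance_order n \<omega> = r"
    and "r \<ge> 1"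
  shows "\<exists>A \<in> GL_int n. \<exists>d :: nat \<Rightarrow> int.
           (\<forall>i<r. d i > 0) \<and> (\<forall>i. i + 1 < r \<longrightarrow> d i dvd d (i + 1)) \<and>
           is_zbasis (resonance_module n (mat_vec n A \<omega>)) r (\<lambda>i. (\<lambda>j. d i * std_basis i j)) \<and>
           rational_vec r (mat_vec n A \<omega>) \<and>
           int (period r (mat_vec n A \<omega>)) = d (r - 1) \<and>
           \<not> resonant (n - r) (\<lambda>i. mat_vec n A \<omega> (r + i)) \<and>
           (r = n \<longrightarrow>
              int (period n \<omega>) = d (n - 1) \<and>
              (\<exists>a :: nat \<Rightarrow> int. \<forall>i<n. mat_vec n A \<omega> i = of_int (a i) / of_int (d i)
                                       \<and> coprime (a i) (d i)))"
proof -
  obtain A B a T where AB: "inverse_mats n A B" and nf: "resonance_normal_form n r a T (mat_vec n A \<omega>)"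
    using exists_unimodular_normal_form assms(2,3) unfolding resonance_order_def by blast
  define y where "y = mat_vec n A \<omega>"
  define d where "d = normal_form_scales r T"
  define a' where "a' = (\<lambda>i. if i = r - 1 then a else 0)"
  have y: "\<forall>i<r. y i = of_int (a' i) / of_int (d i) \<and> coprime (a' i) (d i)"
    using nf by (simp add: y_def d_def a'_def normal_form_scales_def resonance_normal_form_def)
  have d: "\<forall>i<r. d i > 0" "\<forall>i. i + 1 < r \<longrightarrow> d i dvd d (i + 1)"
    using nf by (auto simp: d_def normal_form_scales_def resonance_normal_form_def)
  moreover have "is_zbasis (resonance_module n y) r (\<lambda>i j. d i * std_basis i j)"
    using is_zbasis_resonance_module_normal_form[OF nf] by (simp add: y_def d_def)
  moreover have "rational_vec r y"
    using y by (simp add: rational_vec_def)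
  moreover have "int (period r y) = d (r - 1)"
    using period_normal_form[OF nf] by (simp add: y_def d_def normal_form_scales_def)
  moreover have "period n \<omega> = period n y"
    using period_mat_vec[OF AB] by (simp add: y_def)
  ultimately show ?thesis
    using inverse_mats_GL_int[OF AB] nf y unfolding y_def
    by (intro bexI[of _ A] exI[of _ d]) (auto simp: resonance_normal_form_def intro!: exI[of _ a'])
qed

end
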